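(* Every $(2P_3,C_4,C_6,C_7,\text{3-pentagon})$-free graph is $(\text{3PC},\text{proper wheel})$-free, i.e. it contains no induced subgraph that is a theta, a pyramid, a prism, or a proper wheel.
   Context: Graphs are finite, simple, nonnull. A graph is $(H_1,\dots,H_m)$-free if it has no induced subgraph isomorphic to any $H_i$. $P_k$, $C_k$ are the path and cycle on $k$ vertices; $2P_3$ is two disjoint copies of $P_3$. The 3-pentagon is the graph on vertices $a,b_1,b_2,b_3,c_1,c_2,c_3$ where $a$ is adjacent to each $b_i$ and to no $c_i$, $\{b_1,b_2,b_3\}$ is stable, $\{c_1,c_2,c_3\}$ is a clique, and $b_ic_j$ is an edge iff $i=j$. A hole is an induced cycle on at least four vertices. A theta is any subdivision of $K_{2,3}$ (including $K_{2,3}$). A pyramid is any subdivision of $K_4$ in which one triangle remains unsubdivided and, of the remaining three edges, at least two are subdivided at least once. A prism is any subdivision of $\overline{C_6}$ (the complement of $C_6$, including $\overline{C_6}$ itself) in which the two triangles remain unsubdivided. A 3PC is a theta, pyramid, or prism. A wheel is a graph consisting of a hole and an additional vertex with at least three neighbours in the hole; it is universal if that vertex is adjacent to all vertices of the hole, a twin wheel if it is adjacent to exactly three consecutive vertices of the hole and no others, and proper if it is neither universal nor a twin wheel. *)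

theory Defs
  imports Main
begin

definition graph :: "'a set \<Rightarrow> ('a \<Rightarrow> 'a \<Rightarrow> bool) \<Rightarrow> bool" where
  "graph V E \<longleftrightarrow> finite V \<and> V \<noteq> {} \<and> (\<forall>x y. E x y \<longrightarrow> E y x) \<and> (\<forall>x. \<not> E x x)
     \<and> (\<forall>x y. E x y \<longrightarrow> x \<in> V \<and> y \<in> V)"

definition has_induced :: "'a set \<Rightarrow> ('a \<Rightarrow> 'a \<Rightarrow> bool) \<Rightarrow> 'b set \<Rightarrow> ('b \<Rightarrow> 'b \<Rightarrow> bool) \<Rightarrow> bool" where
  "has_induced V E HV HE \<longleftrightarrow> (\<exists>f. inj_on f HV \<and> f ` HV \<subseteq> V \<and>
      (\<forall>u\<in>HV. \<forall>v\<in>HV. HE u v \<longleftrightarrow> E (f u) (f v)))"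

definition path_E :: "nat \<Rightarrow> nat \<Rightarrow> nat \<Rightarrow> bool" where
  "path_E k i j \<longleftrightarrow> i < k \<and> j < k \<and> (i = j + 1 \<or> j = i + 1)"

definition cycle_E :: "nat \<Rightarrow> nat \<Rightarrow> nat \<Rightarrow> bool" where
  "cycle_E k i j \<longleftrightarrow> i < k \<and> j < k \<and> i \<noteq> j \<and> ((i + 1) mod k = j \<or> (j + 1) mod k = i)"

(* 2P_3 on {0..<6}: paths 0-1-2 and 3-4-5 *)
definition twoP3_E :: "nat \<Rightarrow> nat \<Rightarrow> bool" where
  "twoP3_E i j \<longleftrightarrow> path_E 3 i j \<or> (i \<ge> 3 \<and> j \<ge> 3 \<and> path_E 3 (i - 3) (j - 3))"

(* 3-pentagon on {0..<7}: a = 0, b_i = i (i=1,2,3), c_i = i+3 *)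
definition pent3_edge :: "nat \<Rightarrow> nat \<Rightarrow> bool" where
  "pent3_edge i j \<longleftrightarrow> (i = 0 \<and> j \<in> {1,2,3}) \<or> (i \<in> {4,5,6} \<and> j \<in> {4,5,6} \<and> i \<noteq> j)
     \<or> (i \<in> {1,2,3} \<and> j = i + 3)"

definition pent3_E :: "nat \<Rightarrow> nat \<Rightarrow> bool" where
  "pent3_E i j \<longleftrightarrow> pent3_edge i j \<or> pent3_edge j i"

definition interior :: "'a list \<Rightarrow> 'a list" where
  "interior xs = butlast (tl xs)"

definition path_adj :: "'a list \<Rightarrow> 'a \<Rightarrow> 'a \<Rightarrow> bool" where
  "path_adj xs x y \<longleftrightarrow> (\<exists>k. Suc k < length xs \<and>
      ((xs ! k = x \<and> xs ! Suc k = y) \<or> (xs ! k = y \<and> xs ! Suc k = x)))"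

(* The induced subgraph G[S] is (isomorphic to) a subdivision of the base graph K with
   vertex set KV and edge list es: \<phi> maps branch vertices, P i is the path replacing es!i. *)
definition subdiv_in :: "('a \<Rightarrow> 'a \<Rightarrow> bool) \<Rightarrow> 'a set \<Rightarrow> nat set \<Rightarrow> (nat \<times> nat) list
      \<Rightarrow> (nat \<Rightarrow> 'a) \<Rightarrow> (nat \<Rightarrow> 'a list) \<Rightarrow> bool" where
  "subdiv_in E S KV es \<phi> P \<longleftrightarrow>
     inj_on \<phi> KV \<and>
     (\<forall>i<length es. fst (es ! i) \<in> KV \<and> snd (es ! i) \<in> KV \<and> distinct (P i) \<and> length (P i) \<ge> 2
        \<and> hd (P i) = \<phi> (fst (es ! i)) \<and> last (P i) = \<phi> (snd (es ! i))
        \<and> (\<forall>x\<in>set (interior (P i)). x \<notin> \<phi> ` KV)) \<and>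
     (\<forall>i<length es. \<forall>j<length es. i \<noteq> j \<longrightarrow> set (interior (P i)) \<inter> set (interior (P j)) = {}) \<and>
     S = \<phi> ` KV \<union> (\<Union>i<length es. set (P i)) \<and>
     (\<forall>x\<in>S. \<forall>y\<in>S. E x y \<longleftrightarrow> (\<exists>i<length es. path_adj (P i) x y))"

(* K_{2,3}: sides {0,1} and {2,3,4} *)
definition K23_edges :: "(nat \<times> nat) list" where
  "K23_edges = [(0,2),(0,3),(0,4),(1,2),(1,3),(1,4)]"

(* K_4 on {0,1,2,3}; indices 0,1,2 form the triangle {0,1,2} *)
definition K4_edges :: "(nat \<times> nat) list" where
  "K4_edges = [(0,1),(1,2),(0,2),(0,3),(1,3),(2,3)]"

(* complement of C_6 (cycle 0-1-2-3-4-5-0): triangles {0,2,4},{1,3,5} (indices 0..5),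
   matching edges (0,3),(1,4),(2,5) (indices 6,7,8) *)
definition C6bar_edges :: "(nat \<times> nat) list" where
  "C6bar_edges = [(0,2),(2,4),(0,4),(1,3),(3,5),(1,5),(0,3),(1,4),(2,5)]"

definition is_theta :: "('a \<Rightarrow> 'a \<Rightarrow> bool) \<Rightarrow> 'a set \<Rightarrow> bool" where
  "is_theta E S \<longleftrightarrow> (\<exists>\<phi> P. subdiv_in E S {0..4} K23_edges \<phi> P)"

definition is_pyramid :: "('a \<Rightarrow> 'a \<Rightarrow> bool) \<Rightarrow> 'a set \<Rightarrow> bool" where
  "is_pyramid E S \<longleftrightarrow> (\<exists>\<phi> P. subdiv_in E S {0..3} K4_edges \<phi> P
      \<and> length (P 0) = 2 \<and> length (P 1) = 2 \<and> length (P 2) = 2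
      \<and> card {i \<in> {3,4,5}. length (P i) \<ge> 3} \<ge> 2)"

definition is_prism :: "('a \<Rightarrow> 'a \<Rightarrow> bool) \<Rightarrow> 'a set \<Rightarrow> bool" where
  "is_prism E S \<longleftrightarrow> (\<exists>\<phi> P. subdiv_in E S {0..5} C6bar_edges \<phi> P
      \<and> (\<forall>i<6. length (P i) = 2))"

definition has_3PC :: "'a set \<Rightarrow> ('a \<Rightarrow> 'a \<Rightarrow> bool) \<Rightarrow> bool" where
  "has_3PC V E \<longleftrightarrow> (\<exists>S\<subseteq>V. is_theta E S \<or> is_pyramid E S \<or> is_prism E S)"

definition hole :: "('a \<Rightarrow> 'a \<Rightarrow> bool) \<Rightarrow> 'a list \<Rightarrow> bool" where
  "hole E cs \<longleftrightarrow> distinct cs \<and> length cs \<ge> 4 \<and>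
     (\<forall>i<length cs. \<forall>j<length cs. E (cs ! i) (cs ! j) \<longleftrightarrow> cycle_E (length cs) i j)"

definition proper_wheel :: "('a \<Rightarrow> 'a \<Rightarrow> bool) \<Rightarrow> 'a list \<Rightarrow> 'a \<Rightarrow> bool" where
  "proper_wheel E cs x \<longleftrightarrow> hole E cs \<and> x \<notin> set cs \<and>
     card {v \<in> set cs. E x v} \<ge> 3 \<and>
     \<not> (\<forall>v\<in>set cs. E x v) \<and>
     \<not> (\<exists>i<length cs. {v \<in> set cs. E x v} =
            {cs ! i, cs ! ((i + 1) mod length cs), cs ! ((i + 2) mod length cs)})"

definition has_proper_wheel :: "'a set \<Rightarrow> ('a \<Rightarrow> 'a \<Rightarrow> bool) \<Rightarrow> bool" where
  "has_proper_wheel V E \<longleftrightarrow> (\<exists>cs x. set cs \<subseteq> V \<and> x \<in> V \<and> proper_wheel E cs x)"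

end

theory Submission
  imports Defs
begin

(* Every hole has length 5: a hole of length at least 8 contains an induced 2P3, and holes of
   length 4, 6 and 7 are excluded outright.  Gluing the subdivided edges of a 3PC along a chordless
   cycle of its base graph (K_{2,3}, K_4 or the complement of C_6) gives a hole as soon as the
   result has at least 4 vertices, so such cycles have total length 5.  In a theta or a prism the
   three paths pairwise form such holes, so three numbers would have the same odd pairwise sum
   (5, resp. 3), which parity forbids.  In a pyramid the same constraint forces all three apex
   paths to have length 2, and that pyramid is the 3-pentagon.  Finally, the hub of a proper wheel
   on a 5-hole c_0 ... c_4 sees some c_(i-1) and c_(i+1) but not c_i, which gives an induced C_4. *)

lemma hd_interior_last: "2 \<le> length xs \<Longrightarrow> xs = hd xs # interior xs @ [last xs]"
  unfolding interior_def by (cases xs) (auto simp: last_tl)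

lemma butlast_eq_hd_interior: "2 \<le> length xs \<Longrightarrow> butlast xs = hd xs # interior xs"
  unfolding interior_def by (cases xs) auto

lemma tl_eq_interior_last: "2 \<le> length xs \<Longrightarrow> tl xs = interior xs @ [last xs]"
  unfolding interior_def by (cases xs) (auto simp: last_tl)

lemma length_2_eq_hd_last: "length xs = 2 \<Longrightarrow> hd xs = a \<Longrightarrow> last xs = b \<Longrightarrow> xs = [a, b]"
  by (cases xs; cases "tl xs") auto

lemma length_3_eq_hd_mid_last: "length xs = 3 \<Longrightarrow> hd xs = a \<Longrightarrow> last xs = c \<Longrightarrow> xs = [a, xs ! 1, c]"
  by (cases xs; cases "tl xs"; cases "tl (tl xs)") auto

lemma distinct_concat_map:
  assumes "distinct xs" "\<And>x. x \<in> set xs \<Longrightarrow> distinct (f x)"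
    and "\<And>x y. x \<in> set xs \<Longrightarrow> y \<in> set xs \<Longrightarrow> x \<noteq> y \<Longrightarrow> set (f x) \<inter> set (f y) = {}"
  shows "distinct (concat (map f xs))"
  using assms by (induction xs) (simp_all, blast)

lemma path_adj_Nil [simp]: "\<not> path_adj [] x y"
  by (simp add: path_adj_def)

lemma path_adj_Cons:
  "path_adj (a # xs) x y \<longleftrightarrow>
     (xs \<noteq> [] \<and> ((a = x \<and> hd xs = y) \<or> (a = y \<and> hd xs = x))) \<or> path_adj xs x y"
proof (cases xs)
  case (Cons b ys)
  have "path_adj (a # b # ys) x y \<longleftrightarrow>
      (\<exists>k<Suc (length ys). ((a # b # ys) ! k = x \<and> (b # ys) ! k = y) \<or> ((a # b # ys) ! k = y \<and> (b # ys) ! k = x))"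
    unfolding path_adj_def by auto
  also have "\<dots> \<longleftrightarrow> ((a = x \<and> b = y) \<or> (a = y \<and> b = x)) \<or> path_adj (b # ys) x y"
    unfolding Ex_less_Suc2 path_adj_def by auto
  finally show ?thesis using Cons by simp
qed (simp add: path_adj_def)

lemma path_adj_append:
  "path_adj (xs @ ys) x y \<longleftrightarrow> path_adj xs x y \<or> path_adj ys x y \<or>
     (xs \<noteq> [] \<and> ys \<noteq> [] \<and> ((last xs = x \<and> hd ys = y) \<or> (last xs = y \<and> hd ys = x)))"
  by (induction xs) (auto simp: path_adj_Cons)

lemma path_adj_rev [simp]: "path_adj (rev xs) x y \<longleftrightarrow> path_adj xs x y"
  by (induction xs) (auto simp: path_adj_append path_adj_Cons last_rev hd_rev)

lemma path_adj_mem: "path_adj xs x y \<Longrightarrow> x \<in> set xs \<and> y \<in> set xs"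
  unfolding path_adj_def by auto

lemma path_adj_distinct_neq: "distinct xs \<Longrightarrow> path_adj xs x y \<Longrightarrow> x \<noteq> y"
  unfolding path_adj_def by (auto simp: nth_eq_iff_index_eq)

lemma path_adj_concat_butlast:
  assumes "qs \<noteq> []" "\<forall>q\<in>set qs. 2 \<le> length q" "successively (\<lambda>p q. last p = hd q) qs"
  shows "path_adj (concat (map butlast qs) @ [last (last qs)]) x y \<longleftrightarrow> (\<exists>q\<in>set qs. path_adj q x y)"
  using assms
proof (induction qs)
  case (Cons q qs)
  have q: "q = butlast q @ [last q]" using Cons.prems(2) by (cases q rule: rev_cases) auto
  show ?case
  proof (cases "qs = []")
    case True
    then show ?thesis by (subst (2) q) simp
  next
    case False
    define R where "R = concat (map butlast qs) @ [last (last qs)]"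
    have IH: "path_adj R x y \<longleftrightarrow> (\<exists>p\<in>set qs. path_adj p x y)"
      using Cons False by (simp add: R_def successively_Cons)
    have "butlast (hd qs) \<noteq> []" using Cons.prems(2) False by (cases qs; cases "hd qs" rule: rev_cases) auto
    then have "hd R = hd (hd qs)" using False by (cases qs; cases "hd qs") (auto simp: R_def)
    also have "\<dots> = last q" using Cons.prems(3) False by (simp add: successively_Cons)
    finally have "hd R = last q" .
    have "concat (map butlast (q # qs)) @ [last (last (q # qs))] = butlast q @ R"
      using False by (simp add: R_def)
    moreover have "path_adj (butlast q @ R) x y \<longleftrightarrow> path_adj (butlast q) x y \<or> path_adj R x y \<or>
        (butlast q \<noteq> [] \<and> ((last (butlast q) = x \<and> last q = y) \<or> (last (butlast q) = y \<and> last q = x)))"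
      using \<open>hd R = last q\<close> by (simp add: path_adj_append R_def)
    moreover have "path_adj q x y \<longleftrightarrow> path_adj (butlast q) x y \<or>
        (butlast q \<noteq> [] \<and> ((last (butlast q) = x \<and> last q = y) \<or> (last (butlast q) = y \<and> last q = x)))"
      by (subst q) (simp add: path_adj_append path_adj_Cons)
    ultimately show ?thesis using IH by auto
  qed
qed simp

section \<open>Induced subgraphs and holes\<close>

lemma has_induced_nth:
  assumes "distinct vs" "set vs \<subseteq> V" "length vs = n"
    and "\<And>i j. i < n \<Longrightarrow> j < n \<Longrightarrow> H i j \<longleftrightarrow> E (vs ! i) (vs ! j)"
  shows "has_induced V E {0..<n} H"
  unfolding has_induced_def using assms by (intro exI[of _ "nth vs"]) (auto simp: inj_on_nth)

lemma has_induced_C4: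
  assumes "graph V E" "distinct [a, b, c, d]" "set [a, b, c, d] \<subseteq> V"
    and "E a b" "E b c" "E c d" "E d a" "\<not> E a c" "\<not> E b d"
  shows "has_induced V E {0..<4} (cycle_E 4)"
proof -
  have sym: "E x y \<longleftrightarrow> E y x" and irrefl: "\<not> E x x" for x y
    using assms(1) unfolding graph_def by blast+
  have "cycle_E 4 i j \<longleftrightarrow> E ([a, b, c, d] ! i) ([a, b, c, d] ! j)" if "i < 4" "j < 4" for i j
  proof -
    have "i = 0 \<or> i = 1 \<or> i = 2 \<or> i = 3" "j = 0 \<or> j = 1 \<or> j = 2 \<or> j = 3" using that by auto
    then show ?thesis
      using assms(4-9) by (elim disjE) (simp_all add: cycle_E_def sym irrefl)
  qed
  then show ?thesis using assms(2,3) by (intro has_induced_nth[of "[a, b, c, d]"]) simp_all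
qed

lemma path_adj_closed_iff_cycle_E:
  assumes "distinct cs" "3 \<le> length cs" "i < length cs" "j < length cs"
  shows "path_adj (cs @ [hd cs]) (cs ! i) (cs ! j) \<longleftrightarrow> cycle_E (length cs) i j"
proof -
  let ?n = "length cs"
  have "cs \<noteq> []" using assms(2) by auto
  have closed_nth: "(cs @ [hd cs]) ! k = cs ! k" "(cs @ [hd cs]) ! Suc k = cs ! (Suc k mod ?n)"
    if "k < ?n" for k
    using that \<open>cs \<noteq> []\<close> by (auto simp: nth_append hd_conv_nth mod_Suc)
  have "path_adj (cs @ [hd cs]) (cs ! i) (cs ! j) \<longleftrightarrow>
      (\<exists>k<?n. (cs ! k = cs ! i \<and> cs ! (Suc k mod ?n) = cs ! j) \<or> (cs ! k = cs ! j \<and> cs ! (Suc k mod ?n) = cs ! i))"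
    unfolding path_adj_def by (auto simp: closed_nth)
  also have "\<dots> \<longleftrightarrow> (\<exists>k<?n. (k = i \<and> Suc k mod ?n = j) \<or> (k = j \<and> Suc k mod ?n = i))"
  proof -
    have "(cs ! k = cs ! a \<and> cs ! (Suc k mod ?n) = cs ! b) \<longleftrightarrow> (k = a \<and> Suc k mod ?n = b)"
      if "k < ?n" "a < ?n" "b < ?n" for k a b
      using that \<open>cs \<noteq> []\<close> by (simp add: nth_eq_iff_index_eq[OF \<open>distinct cs\<close>])
    then show ?thesis using assms(3,4) by blast
  qed
  also have "\<dots> \<longleftrightarrow> cycle_E ?n i j"
  proof -
    have "Suc a mod ?n \<noteq> a" if "a < ?n" for a
    proof (cases "Suc a < ?n")
      case False
      then have "Suc a = ?n" using that by simp
      then show ?thesis using assms(2) by simp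
    qed simp
    note succ_neq = this this[THEN not_sym]
    show ?thesis using assms(3,4) succ_neq by (auto simp: cycle_E_def)
  qed
  finally show ?thesis .
qed

lemma holeI:
  assumes "distinct cs" "4 \<le> length cs"
    and "\<And>x y. x \<in> set cs \<Longrightarrow> y \<in> set cs \<Longrightarrow> E x y \<longleftrightarrow> path_adj (cs @ [hd cs]) x y"
  shows "hole E cs"
  unfolding hole_def using assms path_adj_closed_iff_cycle_E[of cs] by auto

lemma hole_has_induced_cycle:
  "hole E cs \<Longrightarrow> set cs \<subseteq> V \<Longrightarrow> has_induced V E {0..<length cs} (cycle_E (length cs))"
  unfolding hole_def by (auto intro: has_induced_nth)

lemma hole_adj_iff:
  "hole E cs \<Longrightarrow> i < length cs \<Longrightarrow> j < length cs \<Longrightarrow> E (cs ! i) (cs ! j) \<longleftrightarrow> cycle_E (length cs) i j"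
  unfolding hole_def by blast

lemma hole_adj_next:
  assumes "hole E cs" "i < length cs"
  shows "E (cs ! i) (cs ! ((i + 1) mod length cs))"
proof -
  have "(i + 1) mod length cs \<noteq> i"
  proof (cases "i + 1 < length cs")
    case False
    then have "i + 1 = length cs" using assms(2) by simp
    then show ?thesis using assms(1) by (simp add: hole_def)
  qed simp
  moreover have "(i + 1) mod length cs < length cs" using assms(2) by (intro mod_less_divisor) linarith
  ultimately show ?thesis using assms by (simp add: hole_adj_iff cycle_E_def)
qed

lemma hole_not_adj_next2:
  assumes "hole E cs" "i < length cs"
  shows "\<not> E (cs ! i) (cs ! ((i + 2) mod length cs))"
proof -
  let ?n = "length cs"
  have "4 \<le> ?n" using assms(1) by (simp add: hole_def)
  consider "i + 3 < ?n" | "i + 3 = ?n" | "i + 2 = ?n" | "i + 1 = ?n" using assms(2) by linarith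
  then have "\<not> cycle_E ?n i ((i + 2) mod ?n)"
  proof cases
    case 1
    then show ?thesis by (simp add: cycle_E_def)
  next
    case 2
    then have "?n = Suc (Suc (Suc i))" by simp
    then show ?thesis using \<open>4 \<le> ?n\<close> by (simp add: cycle_E_def)
  next
    case 3
    then have "?n = Suc (Suc i)" by simp
    then show ?thesis using \<open>4 \<le> ?n\<close> by (simp add: cycle_E_def)
  next
    case 4
    then have "?n = Suc i" by simp
    moreover have "Suc (Suc i) mod Suc i = 1" using \<open>4 \<le> ?n\<close> 4 by (simp add: mod_Suc)
    ultimately show ?thesis using \<open>4 \<le> ?n\<close> by (simp add: cycle_E_def)
  qed
  moreover have "(i + 2) mod ?n < ?n" using assms(2) by (intro mod_less_divisor) linarith
  ultimately show ?thesis using assms by (simp add: hole_adj_iff)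
qed

lemma long_hole_has_induced_2P3:
  assumes hole: "hole E cs" and "set cs \<subseteq> V" and long: "8 \<le> length cs"
  shows "has_induced V E {0..<6} twoP3_E"
proof -
  define idx :: "nat list" where "idx = [0, 1, 2, 4, 5, 6]"
  define vs where "vs = map ((!) cs) idx"
  have "cs \<noteq> []" using long by auto
  have len_idx: "length idx = 6" by (simp add: idx_def)
  have idx_lt: "\<forall>k\<in>set idx. k < length cs" using long by (auto simp: idx_def)
  have "distinct vs"
    using hole idx_lt by (simp add: vs_def distinct_map hole_def inj_on_nth) (simp add: idx_def)
  moreover have "set vs \<subseteq> V" using idx_lt \<open>set cs \<subseteq> V\<close> by (auto simp: vs_def)
  moreover have "length vs = 6" by (simp add: vs_def len_idx)
  moreover have "twoP3_E i j \<longleftrightarrow> E (vs ! i) (vs ! j)" if "i < 6" "j < 6" for i j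
  proof -
    have "idx ! i < length cs" "idx ! j < length cs"
      using idx_lt that nth_mem[of _ idx] by (auto simp: len_idx)
    then have "E (vs ! i) (vs ! j) \<longleftrightarrow> cycle_E (length cs) (idx ! i) (idx ! j)"
      using hole that by (simp add: vs_def hole_def len_idx)
    moreover have "i = 0 \<or> i = 1 \<or> i = 2 \<or> i = 3 \<or> i = 4 \<or> i = 5"
      and "j = 0 \<or> j = 1 \<or> j = 2 \<or> j = 3 \<or> j = 4 \<or> j = 5" using that by auto
    ultimately show ?thesis
      using long \<open>cs \<noteq> []\<close> by (elim disjE) (simp_all add: idx_def twoP3_E_def path_E_def cycle_E_def)
  qed
  ultimately show ?thesis by (rule has_induced_nth)
qed

lemma hole_length_5:
  assumes "\<not> has_induced V E {0..<6} twoP3_E"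
    and "\<not> has_induced V E {0..<4} (cycle_E 4)"
    and "\<not> has_induced V E {0..<6} (cycle_E 6)"
    and "\<not> has_induced V E {0..<7} (cycle_E 7)"
    and "hole E cs" "set cs \<subseteq> V"
  shows "length cs = 5"
proof -
  have "4 \<le> length cs" using \<open>hole E cs\<close> by (simp add: hole_def)
  moreover have "\<not> 8 \<le> length cs" using long_hole_has_induced_2P3[OF assms(5,6)] assms(1) by blast
  moreover have "length cs \<noteq> 4" "length cs \<noteq> 6" "length cs \<noteq> 7"
    using hole_has_induced_cycle[OF assms(5,6)] assms(2-4) by auto
  ultimately show ?thesis by linarith
qed

section \<open>Cycles of a subdivision\<close>

(* A dart (i, b) traverses edge i of the base graph, from its second end to its first iff b. *)
type_synonym dart = "nat \<times> bool"

definition dart_src :: "(nat \<times> nat) list \<Rightarrow> dart \<Rightarrow> nat" where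
  "dart_src es d = (if snd d then snd (es ! fst d) else fst (es ! fst d))"

definition dart_tgt :: "(nat \<times> nat) list \<Rightarrow> dart \<Rightarrow> nat" where
  "dart_tgt es d = (if snd d then fst (es ! fst d) else snd (es ! fst d))"

definition dart_path :: "(nat \<Rightarrow> 'a list) \<Rightarrow> dart \<Rightarrow> 'a list" where
  "dart_path P d = (if snd d then rev (P (fst d)) else P (fst d))"

(* The darts trace a chordless cycle of the base graph; without distinct es a parallel edge could
   be a chord. *)
definition induced_cycle_darts :: "(nat \<times> nat) list \<Rightarrow> dart list \<Rightarrow> bool" where
  "induced_cycle_darts es ds \<longleftrightarrow>
     ds \<noteq> [] \<and> (\<forall>d\<in>set ds. fst d < length es) \<and> distinct (map fst ds)
     \<and> distinct (map (dart_src es) ds)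
     \<and> successively (\<lambda>d d'. dart_tgt es d = dart_src es d') ds
     \<and> dart_tgt es (last ds) = dart_src es (hd ds)
     \<and> distinct es \<and> (\<forall>e\<in>set es. fst e \<in> dart_src es ` set ds \<and> snd e \<in> dart_src es ` set ds
          \<longrightarrow> e \<in> (\<lambda>d. es ! fst d) ` set ds)"

definition cycle_walk :: "(nat \<Rightarrow> 'a list) \<Rightarrow> dart list \<Rightarrow> 'a list" where
  "cycle_walk P ds = concat (map (butlast \<circ> dart_path P) ds)"

lemma path_adj_dart_path [simp]: "path_adj (dart_path P d) x y \<longleftrightarrow> path_adj (P (fst d)) x y"
  by (simp add: dart_path_def)

context
  fixes E :: "'a \<Rightarrow> 'a \<Rightarrow> bool" and S KV es \<phi> P
  assumes subdiv: "subdiv_in E S KV es \<phi> P"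
begin

lemma subdiv_in_inj: "inj_on \<phi> KV"
  using subdiv by (simp add: subdiv_in_def)

lemma subdiv_in_path:
  assumes "i < length es"
  shows "fst (es ! i) \<in> KV" "snd (es ! i) \<in> KV" "distinct (P i)" "2 \<le> length (P i)"
    "hd (P i) = \<phi> (fst (es ! i))" "last (P i) = \<phi> (snd (es ! i))"
  using subdiv assms by (simp_all add: subdiv_in_def)

lemma subdiv_in_interior_not_branch:
  "i < length es \<Longrightarrow> x \<in> set (interior (P i)) \<Longrightarrow> x \<notin> \<phi> ` KV"
  using subdiv unfolding subdiv_in_def by blast

lemma subdiv_in_interiors_disjoint:
  "i < length es \<Longrightarrow> j < length es \<Longrightarrow> i \<noteq> j \<Longrightarrow> set (interior (P i)) \<inter> set (interior (P j)) = {}"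
  using subdiv unfolding subdiv_in_def by blast

lemma subdiv_in_vertices: "S = \<phi> ` KV \<union> (\<Union>i<length es. set (P i))"
  using subdiv unfolding subdiv_in_def by blast

lemma subdiv_in_adj: "x \<in> S \<Longrightarrow> y \<in> S \<Longrightarrow> E x y \<longleftrightarrow> (\<exists>i<length es. path_adj (P i) x y)"
  using subdiv unfolding subdiv_in_def by blast

lemma set_subdiv_in_path:
  "i < length es \<Longrightarrow> set (P i) = {\<phi> (fst (es ! i)), \<phi> (snd (es ! i))} \<union> set (interior (P i))"
  by (subst hd_interior_last[of "P i"]) (auto simp: subdiv_in_path)

lemma
  assumes "fst d < length es"
  shows hd_dart_path: "hd (dart_path P d) = \<phi> (dart_src es d)"
    and last_dart_path: "last (dart_path P d) = \<phi> (dart_tgt es d)"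
    and distinct_dart_path: "distinct (dart_path P d)"
    and length_dart_path: "length (dart_path P d) = length (P (fst d))"
    and set_dart_path: "set (dart_path P d) = set (P (fst d))"
    and dart_src_in: "dart_src es d \<in> KV"
  using subdiv_in_path[OF assms]
  by (auto simp: dart_path_def dart_src_def dart_tgt_def hd_rev last_rev)

lemma set_butlast_dart_path:
  assumes "fst d < length es"
  shows "set (butlast (dart_path P d)) = insert (\<phi> (dart_src es d)) (set (interior (P (fst d))))"
proof (cases "snd d")
  case True
  then show ?thesis
    using subdiv_in_path[OF assms] by (simp add: dart_path_def dart_src_def tl_eq_interior_last)
next
  case False
  then show ?thesis
    using subdiv_in_path[OF assms] by (simp add: dart_path_def dart_src_def butlast_eq_hd_interior)
qed

context
  fixes ds
  assumes cyc: "induced_cycle_darts es ds"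
begin

lemma cycle_dart_edge: "d \<in> set ds \<Longrightarrow> fst d < length es"
  using cyc by (simp add: induced_cycle_darts_def)

lemma set_cycle_walk:
  "set (cycle_walk P ds) = (\<Union>d\<in>set ds. insert (\<phi> (dart_src es d)) (set (interior (P (fst d)))))"
  by (auto simp: cycle_walk_def set_butlast_dart_path cycle_dart_edge)

lemma cycle_walk_subset: "set (cycle_walk P ds) \<subseteq> S"
proof -
  have "set (butlast (dart_path P d)) \<subseteq> S" if "d \<in> set ds" for d
  proof -
    have "set (butlast (dart_path P d)) \<subseteq> set (P (fst d))"
      using set_dart_path[OF cycle_dart_edge[OF that]] by (auto dest: in_set_butlastD)
    also have "\<dots> \<subseteq> S" using subdiv_in_vertices cycle_dart_edge[OF that] by blast
    finally show ?thesis .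
  qed
  then show ?thesis by (auto simp: cycle_walk_def)
qed

lemma length_cycle_walk: "length (cycle_walk P ds) = (\<Sum>d\<leftarrow>ds. length (P (fst d)) - 1)"
  unfolding cycle_walk_def length_concat map_map
  by (intro arg_cong[where f = sum_list] map_cong) (simp_all add: length_dart_path cycle_dart_edge)

lemma distinct_cycle_walk: "distinct (cycle_walk P ds)"
  unfolding cycle_walk_def
proof (rule distinct_concat_map)
  have inj_fst: "inj_on fst (set ds)" and inj_src: "inj_on (dart_src es) (set ds)"
    using cyc by (simp_all add: induced_cycle_darts_def distinct_map)
  then show "distinct ds"
    using cyc by (simp add: induced_cycle_darts_def distinct_map)
  show "distinct ((butlast \<circ> dart_path P) d)" if "d \<in> set ds" for d
    using that by (simp add: distinct_butlast distinct_dart_path cycle_dart_edge)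
  show "set ((butlast \<circ> dart_path P) d) \<inter> set ((butlast \<circ> dart_path P) d') = {}"
    if "d \<in> set ds" "d' \<in> set ds" "d \<noteq> d'" for d d'
  proof -
    have edges: "fst d < length es" "fst d' < length es" "fst d \<noteq> fst d'"
      using that inj_fst by (auto simp: cycle_dart_edge inj_on_def)
    have "\<phi> (dart_src es d) \<noteq> \<phi> (dart_src es d')"
      using that inj_src subdiv_in_inj dart_src_in[OF edges(1)] dart_src_in[OF edges(2)]
      by (metis inj_on_def)
    moreover have "\<phi> (dart_src es d) \<notin> set (interior (P (fst d')))"
      "\<phi> (dart_src es d') \<notin> set (interior (P (fst d)))"
      using subdiv_in_interior_not_branch dart_src_in edges by blast+
    moreover have "set (interior (P (fst d))) \<inter> set (interior (P (fst d'))) = {}"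
      using subdiv_in_interiors_disjoint edges by blast
    ultimately show ?thesis using edges by (auto simp: set_butlast_dart_path)
  qed
qed

lemma hd_cycle_walk: "hd (cycle_walk P ds) = \<phi> (dart_src es (hd ds))"
proof -
  obtain d ds' where ds: "ds = d # ds'"
    using cyc by (cases ds) (auto simp: induced_cycle_darts_def)
  then have "fst d < length es" using cycle_dart_edge by simp
  then show ?thesis
    using subdiv_in_path(4) by (simp add: ds cycle_walk_def butlast_eq_hd_interior length_dart_path hd_dart_path)
qed

lemma path_adj_cycle_walk:
  "path_adj (cycle_walk P ds @ [hd (cycle_walk P ds)]) x y \<longleftrightarrow> (\<exists>d\<in>set ds. path_adj (P (fst d)) x y)"
proof -
  let ?qs = "map (dart_path P) ds"
  have "ds \<noteq> []" using cyc by (simp add: induced_cycle_darts_def)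
  have "hd (cycle_walk P ds) = last (last ?qs)"
    using cyc \<open>ds \<noteq> []\<close>
    by (simp add: hd_cycle_walk last_map last_dart_path cycle_dart_edge induced_cycle_darts_def)
  moreover have "\<forall>q\<in>set ?qs. 2 \<le> length q"
    using subdiv_in_path(4) by (auto simp: length_dart_path cycle_dart_edge)
  moreover have "successively (\<lambda>p q. last p = hd q) ?qs"
    unfolding successively_map
    using cyc by (auto simp: induced_cycle_darts_def last_dart_path hd_dart_path cycle_dart_edge
      elim!: successively_mono)
  ultimately show ?thesis
    using path_adj_concat_butlast[of ?qs] \<open>ds \<noteq> []\<close> by (simp add: cycle_walk_def)
qed

lemma cycle_walk_off_cycle:
  assumes "x \<in> set (cycle_walk P ds)" "k < length es" "k \<notin> fst ` set ds" "x \<in> set (P k)"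
  shows "x \<in> \<phi> ` dart_src es ` set ds" "x \<in> {\<phi> (fst (es ! k)), \<phi> (snd (es ! k))}"
proof -
  obtain d where d: "d \<in> set ds" "x = \<phi> (dart_src es d) \<or> x \<in> set (interior (P (fst d)))"
    using assms(1) set_cycle_walk by auto
  have edge: "fst d < length es" "fst d \<noteq> k"
    using d(1) assms(3) cycle_dart_edge by (blast, force)
  have "x \<notin> set (interior (P k))"
    using d(2) subdiv_in_interior_not_branch[OF assms(2)] dart_src_in[OF edge(1)]
      subdiv_in_interiors_disjoint[OF edge(1) assms(2) edge(2)] by blast
  then show "x \<in> {\<phi> (fst (es ! k)), \<phi> (snd (es ! k))}"
    using assms(4) set_subdiv_in_path[OF assms(2)] by blast
  then have "x \<notin> set (interior (P (fst d)))"
    using subdiv_in_interior_not_branch[OF edge(1)] subdiv_in_path(1,2)[OF assms(2)] by blast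
  then show "x \<in> \<phi> ` dart_src es ` set ds" using d by blast
qed

lemma cycle_walk_adj:
  assumes "x \<in> set (cycle_walk P ds)" "y \<in> set (cycle_walk P ds)"
  shows "E x y \<longleftrightarrow> (\<exists>d\<in>set ds. path_adj (P (fst d)) x y)"
proof
  assume "E x y"
  then obtain k where k: "k < length es" "path_adj (P k) x y"
    using subdiv_in_adj cycle_walk_subset assms by blast
  show "\<exists>d\<in>set ds. path_adj (P (fst d)) x y"
  proof (cases "k \<in> fst ` set ds")
    case True
    then show ?thesis using k(2) by force
  next
    case False
    let ?C = "dart_src es ` set ds"
    define B where "B = \<phi> ` ?C"
    have "x \<noteq> y" using path_adj_distinct_neq[OF subdiv_in_path(3)[OF k(1)] k(2)] .
    moreover have "x \<in> B" "x \<in> {\<phi> (fst (es ! k)), \<phi> (snd (es ! k))}"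
      "y \<in> B" "y \<in> {\<phi> (fst (es ! k)), \<phi> (snd (es ! k))}"
      using cycle_walk_off_cycle[OF _ k(1) False] assms path_adj_mem[OF k(2)] unfolding B_def by blast+
    ultimately have "{\<phi> (fst (es ! k)), \<phi> (snd (es ! k))} \<subseteq> \<phi> ` ?C" unfolding B_def[symmetric] by blast
    moreover have "?C \<subseteq> KV" using dart_src_in cycle_dart_edge by blast
    ultimately have "fst (es ! k) \<in> ?C" "snd (es ! k) \<in> ?C"
      using inj_on_image_mem_iff[OF subdiv_in_inj] subdiv_in_path(1,2)[OF k(1)] by (metis insert_subset)+
    moreover have "distinct es" "\<forall>e\<in>set es. fst e \<in> ?C \<and> snd e \<in> ?C \<longrightarrow> e \<in> (\<lambda>d. es ! fst d) ` set ds"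
      using cyc by (simp_all add: induced_cycle_darts_def)
    ultimately obtain d where "d \<in> set ds" "es ! k = es ! fst d"
      using nth_mem[OF k(1)] by blast
    then have "k = fst d"
      using \<open>distinct es\<close> k(1) cycle_dart_edge by (simp add: nth_eq_iff_index_eq)
    with False \<open>d \<in> set ds\<close> show ?thesis by blast
  qed
next
  assume "\<exists>d\<in>set ds. path_adj (P (fst d)) x y"
  then show "E x y" using subdiv_in_adj cycle_walk_subset assms cycle_dart_edge by blast
qed

lemma hole_cycle_walk: "4 \<le> length (cycle_walk P ds) \<Longrightarrow> hole E (cycle_walk P ds)"
  by (intro holeI) (simp_all add: distinct_cycle_walk cycle_walk_adj path_adj_cycle_walk)

end

end

lemma subdiv_cycle_length_5:
  assumes holes5: "\<forall>cs. hole E cs \<and> set cs \<subseteq> V \<longrightarrow> length cs = 5"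
    and subdiv: "subdiv_in E S KV es \<phi> P" and "S \<subseteq> V" and cyc: "induced_cycle_darts es ds"
    and "4 \<le> (\<Sum>d\<leftarrow>ds. length (P (fst d)) - 1)"
  shows "(\<Sum>d\<leftarrow>ds. length (P (fst d)) - 1) = 5"
proof -
  let ?cs = "cycle_walk P ds"
  have "hole E ?cs" using hole_cycle_walk[OF subdiv cyc] length_cycle_walk[OF subdiv cyc] assms(5) by simp
  moreover have "set ?cs \<subseteq> V" using cycle_walk_subset[OF subdiv cyc] \<open>S \<subseteq> V\<close> by blast
  ultimately show ?thesis using holes5 length_cycle_walk[OF subdiv cyc] by simp
qed

section \<open>Three-path configurations\<close>

lemma equal_pairwise_sums_even:
  fixes x y z :: nat
  assumes "x + y = s" "x + z = s" "y + z = s"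
  shows "even s"
  using assms by presburger

lemma theta_free:
  assumes holes5: "\<forall>cs. hole E cs \<and> set cs \<subseteq> V \<longrightarrow> length cs = 5" and "S \<subseteq> V"
  shows "\<not> is_theta E S"
proof
  assume "is_theta E S"
  then obtain \<phi> P where subdiv: "subdiv_in E S {0..4} K23_edges \<phi> P"
    unfolding is_theta_def by blast
  define len where "len i = length (P i) - 1" for i
  have pos: "1 \<le> len i" if "i < 6" for i
    using subdiv_in_path(4)[OF subdiv, of i] that by (simp add: len_def K23_edges_def)
  have len5: "(\<Sum>d\<leftarrow>ds. len (fst d)) = 5"
    if "induced_cycle_darts K23_edges ds" "4 \<le> (\<Sum>d\<leftarrow>ds. len (fst d))" for ds
    using subdiv_cycle_length_5[OF holes5 subdiv \<open>S \<subseteq> V\<close>] that unfolding len_def by blast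
  (* The three paths from \<phi> 0 to \<phi> 1, through \<phi> 2, \<phi> 3 and \<phi> 4, have lengths len 0 + len 3,
     len 1 + len 4 and len 2 + len 5, and any two of them form a hole. *)
  have "(\<Sum>d\<leftarrow>[(0, False), (3, True), (4, False), (1, True)]. len (fst d)) = 5"
    by (rule len5) (use pos[of 0] pos[of 3] pos[of 4] pos[of 1] in
        \<open>simp_all add: induced_cycle_darts_def K23_edges_def dart_src_def dart_tgt_def\<close>)
  then have "len 0 + len 3 + (len 1 + len 4) = 5" by (simp add: ac_simps)
  moreover have "(\<Sum>d\<leftarrow>[(0, False), (3, True), (5, False), (2, True)]. len (fst d)) = 5"
    by (rule len5) (use pos[of 0] pos[of 3] pos[of 5] pos[of 2] in
        \<open>simp_all add: induced_cycle_darts_def K23_edges_def dart_src_def dart_tgt_def\<close>)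
  then have "len 0 + len 3 + (len 2 + len 5) = 5" by (simp add: ac_simps)
  moreover have "(\<Sum>d\<leftarrow>[(1, False), (4, True), (5, False), (2, True)]. len (fst d)) = 5"
    by (rule len5) (use pos[of 1] pos[of 4] pos[of 5] pos[of 2] in
        \<open>simp_all add: induced_cycle_darts_def K23_edges_def dart_src_def dart_tgt_def\<close>)
  then have "len 1 + len 4 + (len 2 + len 5) = 5" by (simp add: ac_simps)
  ultimately have "even (5::nat)" by (rule equal_pairwise_sums_even)
  then show False by simp
qed

lemma prism_free:
  assumes holes5: "\<forall>cs. hole E cs \<and> set cs \<subseteq> V \<longrightarrow> length cs = 5" and "S \<subseteq> V"
  shows "\<not> is_prism E S"
proof
  assume "is_prism E S"
  then obtain \<phi> P where subdiv: "subdiv_in E S {0..5} C6bar_edges \<phi> P"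
    and triangles: "\<forall>i<6. length (P i) = 2"
    unfolding is_prism_def by blast
  define len where "len i = length (P i) - 1" for i
  have pos: "1 \<le> len i" if "i < 9" for i
    using subdiv_in_path(4)[OF subdiv, of i] that by (simp add: len_def C6bar_edges_def)
  have tri: "len 0 = 1" "len 1 = 1" "len 2 = 1" "len 3 = 1" "len 4 = 1" "len 5 = 1"
    using triangles by (simp_all add: len_def)
  have len5: "(\<Sum>d\<leftarrow>ds. len (fst d)) = 5"
    if "induced_cycle_darts C6bar_edges ds" "4 \<le> (\<Sum>d\<leftarrow>ds. len (fst d))" for ds
    using subdiv_cycle_length_5[OF holes5 subdiv \<open>S \<subseteq> V\<close>] that unfolding len_def by blast
  (* Any two of the paths 6, 7, 8 joining the triangles, closed by one triangle edge at each end,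
     form a hole. *)
  have "(\<Sum>d\<leftarrow>[(6, False), (3, True), (7, False), (2, True)]. len (fst d)) = 5"
    by (rule len5) (use pos[of 6] pos[of 7] tri in
        \<open>simp_all add: induced_cycle_darts_def C6bar_edges_def dart_src_def dart_tgt_def\<close>)
  then have "len 6 + len 7 = 3" using tri by simp
  moreover have "(\<Sum>d\<leftarrow>[(6, False), (4, False), (8, True), (0, True)]. len (fst d)) = 5"
    by (rule len5) (use pos[of 6] pos[of 8] tri in
        \<open>simp_all add: induced_cycle_darts_def C6bar_edges_def dart_src_def dart_tgt_def\<close>)
  then have "len 6 + len 8 = 3" using tri by simp
  moreover have "(\<Sum>d\<leftarrow>[(7, False), (1, True), (8, False), (5, True)]. len (fst d)) = 5"
    by (rule len5) (use pos[of 7] pos[of 8] tri in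
        \<open>simp_all add: induced_cycle_darts_def C6bar_edges_def dart_src_def dart_tgt_def\<close>)
  then have "len 7 + len 8 = 3" using tri by simp
  ultimately have "even (3::nat)" by (rule equal_pairwise_sums_even)
  then show False by simp
qed

lemma two_of_three:
  "2 \<le> card {i \<in> {a, b, c}. Q i} \<Longrightarrow> Q a \<and> Q b \<or> Q a \<and> Q c \<or> Q b \<and> Q c"
  by (cases "Q a"; cases "Q b"; cases "Q c") (auto simp: Collect_disj_eq Collect_conj_eq card_insert_if)

lemma pyramid_apex_paths_length_3:
  assumes holes5: "\<forall>cs. hole E cs \<and> set cs \<subseteq> V \<longrightarrow> length cs = 5" and "S \<subseteq> V"
    and subdiv: "subdiv_in E S {0..3} K4_edges \<phi> P"
    and triangle: "length (P 0) = 2" "length (P 1) = 2" "length (P 2) = 2"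
    and subdivided: "2 \<le> card {i \<in> {3, 4, 5}. 3 \<le> length (P i)}"
  shows "length (P 3) = 3 \<and> length (P 4) = 3 \<and> length (P 5) = 3"
proof -
  define len where "len i = length (P i) - 1" for i
  have pos: "1 \<le> len i" if "i < 6" for i
    using subdiv_in_path(4)[OF subdiv, of i] that by (simp add: len_def K4_edges_def)
  have tri: "len 0 = 1" "len 1 = 1" "len 2 = 1"
    using triangle by (simp_all add: len_def)
  have len5: "(\<Sum>d\<leftarrow>ds. len (fst d)) = 5"
    if "induced_cycle_darts K4_edges ds" "4 \<le> (\<Sum>d\<leftarrow>ds. len (fst d))" for ds
    using subdiv_cycle_length_5[OF holes5 subdiv \<open>S \<subseteq> V\<close>] that unfolding len_def by blast
  (* Two apex paths and the triangle edge joining their ends form a cycle, which is a hole as soon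
     as its length is at least 4. *)
  have "induced_cycle_darts K4_edges [(3, True), (0, False), (4, False)]"
    "induced_cycle_darts K4_edges [(4, True), (1, False), (5, False)]"
    "induced_cycle_darts K4_edges [(3, True), (2, False), (5, False)]"
    by (simp_all add: induced_cycle_darts_def K4_edges_def dart_src_def dart_tgt_def)
  from this[THEN len5] have "4 \<le> len 3 + 1 + len 4 \<Longrightarrow> len 3 + 1 + len 4 = 5"
    "4 \<le> len 4 + 1 + len 5 \<Longrightarrow> len 4 + 1 + len 5 = 5"
    "4 \<le> len 3 + 1 + len 5 \<Longrightarrow> len 3 + 1 + len 5 = 5"
    using tri by (simp_all add: ac_simps)
  moreover have "2 \<le> len 3 \<and> 2 \<le> len 4 \<or> 2 \<le> len 3 \<and> 2 \<le> len 5 \<or> 2 \<le> len 4 \<and> 2 \<le> len 5"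
    using two_of_three[OF subdivided] by (auto simp: len_def)
  ultimately have "len 3 = 2 \<and> len 4 = 2 \<and> len 5 = 2"
    using pos[of 3] pos[of 4] pos[of 5] by linarith
  then show ?thesis by (auto simp: len_def)
qed

(* The list vs enumerates the apex, the midpoints of the three apex paths and the triangle, in the
   order a, b_1, b_2, b_3, c_1, c_2, c_3 of the 3-pentagon. *)
lemma pyramid_vertex_list:
  assumes subdiv: "subdiv_in E S {0..3} K4_edges \<phi> P"
    and "length (P 0) = 2" "length (P 1) = 2" "length (P 2) = 2"
    and "length (P 3) = 3" "length (P 4) = 3" "length (P 5) = 3"
  obtains vs where "distinct vs" "set vs \<subseteq> S" "length vs = 7"
    and "P 0 = [vs ! 4, vs ! 5]" "P 1 = [vs ! 5, vs ! 6]" "P 2 = [vs ! 4, vs ! 6]"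
    and "P 3 = [vs ! 4, vs ! 1, vs ! 0]" "P 4 = [vs ! 5, vs ! 2, vs ! 0]" "P 5 = [vs ! 6, vs ! 3, vs ! 0]"
proof -
  have ends: "hd (P i) = \<phi> (fst (K4_edges ! i))" "last (P i) = \<phi> (snd (K4_edges ! i))" if "i < 6" for i
    using subdiv_in_path(5,6)[OF subdiv] that by (simp_all add: K4_edges_def)
  define m3 m4 m5 where "m3 = P 3 ! 1" and "m4 = P 4 ! 1" and "m5 = P 5 ! 1"
  have P: "P 0 = [\<phi> 0, \<phi> 1]" "P 1 = [\<phi> 1, \<phi> 2]" "P 2 = [\<phi> 0, \<phi> 2]"
    "P 3 = [\<phi> 0, m3, \<phi> 3]" "P 4 = [\<phi> 1, m4, \<phi> 3]" "P 5 = [\<phi> 2, m5, \<phi> 3]"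
    unfolding m3_def m4_def m5_def
    by (rule length_2_eq_hd_last length_3_eq_hd_mid_last; use assms(2-7) ends in \<open>simp add: K4_edges_def\<close>)+
  have "m3 \<notin> \<phi> ` {0..3}" "m4 \<notin> \<phi> ` {0..3}" "m5 \<notin> \<phi> ` {0..3}"
    using subdiv_in_interior_not_branch[OF subdiv, of 3 m3] subdiv_in_interior_not_branch[OF subdiv, of 4 m4]
      subdiv_in_interior_not_branch[OF subdiv, of 5 m5] P by (simp_all add: K4_edges_def interior_def)
  moreover have "m3 \<noteq> m4" "m3 \<noteq> m5" "m4 \<noteq> m5"
    using subdiv_in_interiors_disjoint[OF subdiv, of 3 4] subdiv_in_interiors_disjoint[OF subdiv, of 3 5]
      subdiv_in_interiors_disjoint[OF subdiv, of 4 5] P by (simp_all add: K4_edges_def interior_def)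
  moreover have "\<phi> i \<noteq> \<phi> j" if "i \<le> 3" "j \<le> 3" "i \<noteq> j" for i j
    using subdiv_in_inj[OF subdiv] that by (auto dest: inj_onD)
  ultimately have "distinct [\<phi> 3, m3, m4, m5, \<phi> 0, \<phi> 1, \<phi> 2]"
    by (auto simp: image_iff)
  moreover have "set [\<phi> 3, m3, m4, m5, \<phi> 0, \<phi> 1, \<phi> 2] \<subseteq> S"
  proof -
    have "set (P i) \<subseteq> S" if "i < 6" for i
      using subdiv_in_vertices[OF subdiv] that by (auto simp: K4_edges_def)
    from this[of 3] this[of 4] this[of 5] show ?thesis by (simp add: P)
  qed
  ultimately show ?thesis using that P by fastforce
qed

lemma pyramid_has_induced_3_pentagon:
  assumes subdiv: "subdiv_in E S {0..3} K4_edges \<phi> P" and "S \<subseteq> V"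
    and "length (P 0) = 2" "length (P 1) = 2" "length (P 2) = 2"
    and "length (P 3) = 3" "length (P 4) = 3" "length (P 5) = 3"
  shows "has_induced V E {0..<7} pent3_E"
proof -
  obtain vs where vs: "distinct vs" "set vs \<subseteq> S" "length vs = 7"
    and P_vs: "P 0 = [vs ! 4, vs ! 5]" "P 1 = [vs ! 5, vs ! 6]" "P 2 = [vs ! 4, vs ! 6]"
      "P 3 = [vs ! 4, vs ! 1, vs ! 0]" "P 4 = [vs ! 5, vs ! 2, vs ! 0]" "P 5 = [vs ! 6, vs ! 3, vs ! 0]"
    using pyramid_vertex_list[OF subdiv assms(3-8)] by blast
  have length_K4_edges: "length K4_edges = 6" by (simp add: K4_edges_def)
  have ex_less_6: "(\<exists>i<6. Q i) \<longleftrightarrow> Q 0 \<or> Q 1 \<or> Q 2 \<or> Q 3 \<or> Q 4 \<or> Q 5" for Q :: "nat \<Rightarrow> bool"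
    by (simp add: numeral_eq_Suc Ex_less_Suc2)
  have "pent3_E i j \<longleftrightarrow> E (vs ! i) (vs ! j)" if "i < 7" "j < 7" for i j
  proof -
    have "vs ! i \<in> S" "vs ! j \<in> S" using vs that by (auto dest: nth_mem)
    then have "E (vs ! i) (vs ! j) \<longleftrightarrow> (\<exists>k<6. path_adj (P k) (vs ! i) (vs ! j))"
      using subdiv_in_adj[OF subdiv] by (simp add: length_K4_edges)
    moreover have "i = 0 \<or> i = 1 \<or> i = 2 \<or> i = 3 \<or> i = 4 \<or> i = 5 \<or> i = 6"
      "j = 0 \<or> j = 1 \<or> j = 2 \<or> j = 3 \<or> j = 4 \<or> j = 5 \<or> j = 6" using that by auto
    ultimately show ?thesis
      unfolding ex_less_6 P_vs using vs
      by (elim disjE) (simp_all add: path_adj_Cons nth_eq_iff_index_eq pent3_E_def pent3_edge_def)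
  qed
  then show ?thesis
    using vs \<open>S \<subseteq> V\<close> by (intro has_induced_nth[of vs]) auto
qed

lemma pyramid_free:
  assumes holes5: "\<forall>cs. hole E cs \<and> set cs \<subseteq> V \<longrightarrow> length cs = 5"
    and no_pent: "\<not> has_induced V E {0..<7} pent3_E" and "S \<subseteq> V"
  shows "\<not> is_pyramid E S"
proof
  assume "is_pyramid E S"
  then obtain \<phi> P where subdiv: "subdiv_in E S {0..3} K4_edges \<phi> P"
    and triangle: "length (P 0) = 2" "length (P 1) = 2" "length (P 2) = 2"
    and "2 \<le> card {i \<in> {3, 4, 5}. 3 \<le> length (P i)}"
    unfolding is_pyramid_def by blast
  then have "length (P 3) = 3 \<and> length (P 4) = 3 \<and> length (P 5) = 3"
    using pyramid_apex_paths_length_3[OF holes5 \<open>S \<subseteq> V\<close>] by blast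
  then show False
    using pyramid_has_induced_3_pentagon[OF subdiv \<open>S \<subseteq> V\<close> triangle] no_pent by blast
qed

section \<open>Proper wheels\<close>

lemma five_cycle_gap:
  assumes "distinct cs" "length cs = 5"
    and "3 \<le> card {v \<in> set cs. A v}" "\<not> (\<forall>v\<in>set cs. A v)"
    and "\<not> (\<exists>i<length cs. {v \<in> set cs. A v} =
            {cs ! i, cs ! ((i + 1) mod length cs), cs ! ((i + 2) mod length cs)})"
  shows "\<exists>i<5. A (cs ! i) \<and> \<not> A (cs ! ((i + 1) mod 5)) \<and> A (cs ! ((i + 2) mod 5))"
proof -
  obtain c0 c1 c2 c3 c4 where cs: "cs = [c0, c1, c2, c3, c4]"
    using assms(2) by (auto simp: numeral_eq_Suc length_Suc_conv)
  have ex_less_5: "(\<exists>i<5. Q i) \<longleftrightarrow> Q 0 \<or> Q 1 \<or> Q 2 \<or> Q 3 \<or> Q 4" for Q :: "nat \<Rightarrow> bool"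
    by (simp add: numeral_eq_Suc Ex_less_Suc2)
  have filter: "{v \<in> set cs. A v} = set (filter A cs)" by auto
  have no_triple: "\<not> (\<exists>i<5. set (filter A cs) = {cs ! i, cs ! ((i + 1) mod 5), cs ! ((i + 2) mod 5)})"
    using assms(5) unfolding assms(2) filter .
  have "3 \<le> length (filter A cs)"
    using assms(1,3) distinct_card[of "filter A cs"] by simp
  then show ?thesis
    using assms(1,4) no_triple unfolding cs ex_less_5
    by (cases "A c0"; cases "A c1"; cases "A c2"; cases "A c3"; cases "A c4"; simp add: insert_commute)
qed

lemma proper_wheel_free:
  assumes "graph V E" and no_C4: "\<not> has_induced V E {0..<4} (cycle_E 4)"
    and holes5: "\<forall>cs. hole E cs \<and> set cs \<subseteq> V \<longrightarrow> length cs = 5"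
    and "set cs \<subseteq> V" "x \<in> V"
  shows "\<not> proper_wheel E cs x"
proof
  assume wheel: "proper_wheel E cs x"
  then have hole: "hole E cs" and "x \<notin> set cs" by (simp_all add: proper_wheel_def)
  then have five: "length cs = 5" using holes5 \<open>set cs \<subseteq> V\<close> by blast
  have "distinct cs" using hole by (simp add: hole_def)
  then obtain i where i: "i < 5"
    and gap: "E x (cs ! i)" "\<not> E x (cs ! ((i + 1) mod 5))" "E x (cs ! ((i + 2) mod 5))"
    using five_cycle_gap[of cs "E x"] wheel five unfolding proper_wheel_def by blast
  let ?p = "cs ! i" and ?q = "cs ! ((i + 1) mod 5)" and ?r = "cs ! ((i + 2) mod 5)"
  have "((i + 1) mod 5 + 1) mod 5 = (i + 2) mod (5::nat)" by presburger
  then have "E ?p ?q" "E ?q ?r" "\<not> E ?p ?r"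
    using hole_adj_next[OF hole, of i] hole_adj_next[OF hole, of "(i + 1) mod 5"]
      hole_not_adj_next2[OF hole, of i] i five by simp_all
  moreover have "distinct [x, ?p, ?q, ?r]"
  proof -
    have "i \<noteq> (i + 1) mod 5" "i \<noteq> (i + 2) mod 5" "(i + 1) mod 5 \<noteq> (i + 2) mod 5"
      using i by presburger+
    then show ?thesis
      using \<open>x \<notin> set cs\<close> \<open>distinct cs\<close> i five by (auto simp: nth_eq_iff_index_eq)
  qed
  moreover have "set [x, ?p, ?q, ?r] \<subseteq> V" using \<open>set cs \<subseteq> V\<close> \<open>x \<in> V\<close> i five by auto
  moreover have "E ?r x" using gap(3) \<open>graph V E\<close> by (simp add: graph_def)
  ultimately have "has_induced V E {0..<4} (cycle_E 4)"
    using has_induced_C4[OF \<open>graph V E\<close>] gap by blast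
  then show False using no_C4 by contradiction
qed

theorem proposition6p1:
  fixes V :: "'a set" and E :: "'a \<Rightarrow> 'a \<Rightarrow> bool"
  assumes "graph V E"
    and "\<not> has_induced V E {0..<6} twoP3_E"
    and "\<not> has_induced V E {0..<4} (cycle_E 4)"
    and "\<not> has_induced V E {0..<6} (cycle_E 6)"
    and "\<not> has_induced V E {0..<7} (cycle_E 7)"
    and "\<not> has_induced V E {0..<7} pent3_E"
  shows "\<not> has_3PC V E \<and> \<not> has_proper_wheel V E"
proof
  have holes5: "\<forall>cs. hole E cs \<and> set cs \<subseteq> V \<longrightarrow> length cs = 5"
    using hole_length_5[OF assms(2-5)] by blast
  show "\<not> has_3PC V E"
    unfolding has_3PC_def
    using theta_free[OF holes5] pyramid_free[OF holes5 assms(6)] prism_free[OF holes5] by blast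
  show "\<not> has_proper_wheel V E"
    unfolding has_proper_wheel_def using proper_wheel_free[OF assms(1,3) holes5] by blast
qed

end
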